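(* Let $\Sigma$ be a simply connected non-planar minimal surface in $\mathbb{R}^3$, parametrized (up to translations) by the conformal harmonic immersion \[ \mathbf{X}(\zeta)=\Big(\mathrm{Re}\int\phi_1(\zeta)\,d\zeta,\ \mathrm{Re}\int\phi_2(\zeta)\,d\zeta,\ \mathrm{Re}\int\phi_3(\zeta)\,d\zeta\Big), \] where $\zeta$ is a conformal coordinate and the holomorphic null curve $\phi=(\phi_1,\phi_2,\phi_3)$ is given in terms of Weierstrass data $(G(\zeta),\Psi(\zeta)\,d\zeta)$ ($G$ meromorphic, $\Psi\,d\zeta$ a holomorphic one-form) by \[ \phi=\Big(\tfrac12(1-G^2)\Psi,\ \tfrac{i}{2}(1+G^2)\Psi,\ G\Psi\Big). \] Let $c\in\mathbb{C}$ be a constant and define the holomorphic curve $\widehat{\phi}=(\widehat{\phi}_0,\widehat{\phi}_1,\widehat{\phi}_2,\widehat{\phi}_3)$ by \[ \widehat{\phi}=\Big(c\,G^2\Psi,\ \tfrac12\big(1+(c^2-1)G^2\big)\Psi,\ \tfrac{i}{2}\big(1+(c^2+1)G^2\big)\Psi,\ G\Psi\Big). \] Then there exists a minimal surface $\Sigma^c$ in $\mathbb{R}^4$, parametrized (up to translations) by the conformal harmonic immersion \[ \mathbf{X}^c(\zeta)=\Big(\mathrm{Re}\int\widehat{\phi}_0\,d\zeta,\ \mathrm{Re}\int\widehat{\phi}_1\,d\zeta,\ \mathrm{Re}\int\widehat{\phi}_2\,d\zeta,\ \mathrm{Re}\int\widehat{\phi}_3\,d\zeta\Big). \] The metric induced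 on $\Sigma^c$ by $\mathbf{X}^c$ is \[ g_{\Sigma^c}=\frac14\Big(|\Psi|^2\,|1+c^2G^2|^2\Big(1+\frac{|G|^2}{|1+icG|^2}\Big)\Big(1+\frac{|G|^2}{|1-icG|^2}\Big)\Big)|d\zeta|^2 . \] Moreover $\widehat{\phi}_0+c\,\widehat{\phi}_1+ic\,\widehat{\phi}_2=0$, and consequently the minimal surface $\Sigma^c$ in $\mathbb{R}^4$ is degenerate.
   Context: For a conformal harmonic immersion $\mathbf{X}:\Sigma\to\mathbb{R}^4$ with local conformal coordinate $\zeta$, its Gauss map is $\mathcal{G}(\zeta)=[\partial\mathbf{X}/\partial\zeta]=[\phi_0:\phi_1:\phi_2:\phi_3]\in\mathbb{CP}^3$, where $(\phi_0,\ldots,\phi_3)=2\,d\mathbf{X}/d\zeta$; it takes values in the quadric $\{z_0^2+z_1^2+z_2^2+z_3^2=0\}\subset\mathbb{CP}^3$. The minimal surface is called degenerate if the image of its Gauss map lies in a hyperplane of $\mathbb{CP}^3$. A holomorphic curve $(\phi_k)$ is null if $\sum_k\phi_k^2=0$; the real parts of integrals of a holomorphic null curve give a conformal harmonic map, with induced metric $\frac12\sum_k|\phi_k|^2|d\zeta|^2$. *)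

theory Defs
  imports "HOL-Analysis.Analysis" "HOL-Complex_Analysis.Complex_Analysis"
begin

text \<open>Surfaces are maps from a domain U of the conformal coordinate
  zeta = x + i y (a subset of the complex plane) into real^n.\<close>

definition px :: "(complex \<Rightarrow> 'a::real_normed_vector) \<Rightarrow> complex \<Rightarrow> 'a" where
  "px X z = frechet_derivative X (at z) 1"

definition py :: "(complex \<Rightarrow> 'a::real_normed_vector) \<Rightarrow> complex \<Rightarrow> 'a" where
  "py X z = frechet_derivative X (at z) \<i>"

definition conformal_harmonic_immersion :: "(complex \<Rightarrow> real^'n) \<Rightarrow> complex set \<Rightarrow> bool" where
  "conformal_harmonic_immersion X U \<longleftrightarrow> open U \<and>
     (\<forall>z\<in>U. X differentiable at z \<and> px X differentiable at z \<and> py X differentiable at z) \<and>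
     continuous_on U (px (px X)) \<and> continuous_on U (py (px X)) \<and>
     continuous_on U (px (py X)) \<and> continuous_on U (py (py X)) \<and>
     (\<forall>z\<in>U. px (px X) z + py (py X) z = 0) \<and>
     (\<forall>z\<in>U. px X z \<bullet> py X z = 0 \<and> norm (px X z) = norm (py X z) \<and> px X z \<noteq> 0)"

text \<open>(phi_k) = 2 dX/dzeta = X_x - i X_y, a representative of the Gauss map.\<close>
definition dphi :: "(complex \<Rightarrow> real^'n) \<Rightarrow> complex \<Rightarrow> complex^'n" where
  "dphi X z = (\<chi> k. complex_of_real (px X z $ k) - \<i> * complex_of_real (py X z $ k))"

text \<open>Degenerate: the Gauss map image lies in a hyperplane of CP^(n-1).\<close>
definition degenerate_surface :: "(complex \<Rightarrow> real^'n) \<Rightarrow> complex set \<Rightarrow> bool" where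
  "degenerate_surface X U \<longleftrightarrow>
     (\<exists>a::complex^'n. a \<noteq> 0 \<and> (\<forall>z\<in>U. (\<Sum>k\<in>UNIV. a $ k * dphi X z $ k) = 0))"

text \<open>Coefficient lambda of the induced metric g = lambda |dzeta|^2 (= |X_x|^2 = |X_y|^2).\<close>
definition induced_metric :: "(complex \<Rightarrow> real^'n) \<Rightarrow> complex \<Rightarrow> real" where
  "induced_metric X z = px X z \<bullet> px X z"

definition planar_surface :: "(complex \<Rightarrow> real^3) \<Rightarrow> complex set \<Rightarrow> bool" where
  "planar_surface X U \<longleftrightarrow> (\<exists>a b. a \<noteq> 0 \<and> (\<forall>z\<in>U. a \<bullet> X z = b))"

end

theory Submission
  imports Defs
begin

text \<open>
  Off the poles of \<open>G\<close>, the lifted curve \<open>\<phi>h\<close> is a polynomial in \<open>G\<close> times \<open>\<Psi>\<close>, and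
  direct computation shows that it is null, satisfies \<open>\<phi>h0 + c \<phi>h1 + i c \<phi>h2 = 0\<close>, and determines
  \<open>\<phi>\<close> linearly; by continuity these identities hold on all of \<open>U\<close>, the poles being isolated.
  Since \<open>\<phi> = dphi X\<close> vanishes nowhere, neither does \<open>\<phi>h\<close>. On a simply connected domain \<open>\<phi>h\<close>
  has a primitive \<open>F\<close>, and the real part of a primitive of a nowhere vanishing holomorphic null
  curve is a conformal harmonic immersion with \<open>dphi = \<phi>h\<close> and metric \<open>\<Sum>|\<phi>h\<^sub>k|\<^sup>2 / 2\<close>;
  the latter factors as stated. The linear relation exhibits the hyperplane containing the
  Gauss map.
\<close>

text \<open>With \<open>F\<close> a primitive of \<open>f\<close>, \<open>re_part F\<close> is the surface \<open>Re \<integral> f d\<zeta>\<close>.\<close>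

definition re_part :: "('n::finite \<Rightarrow> complex \<Rightarrow> complex) \<Rightarrow> complex \<Rightarrow> real^'n" where
  "re_part f z = (\<chi> k. Re (f k z))"

lemma has_derivative_re_part:
  fixes f :: "'n::finite \<Rightarrow> complex \<Rightarrow> complex" and f' :: "'n \<Rightarrow> complex"
  assumes "\<And>k. (f k has_field_derivative f' k) (at z)"
  shows "(re_part f has_derivative (\<lambda>h. \<chi> k. Re (f' k * h))) (at z)"
  unfolding re_part_def
proof (subst has_derivative_componentwise_within, intro ballI)
  fix i :: "real^'n" assume "i \<in> Basis"
  then obtain k where i: "i = axis k 1" by (auto simp: Basis_vec_def)
  have "((\<lambda>w. Re (f k w)) has_derivative (\<lambda>h. Re (f' k * h))) (at z)"
    using assms[of k] by (intro has_derivative_Re) (simp add: has_field_derivative_def)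
  then show "((\<lambda>w. (\<chi> k. Re (f k w)) \<bullet> i) has_derivative (\<lambda>h. (\<chi> k. Re (f' k * h)) \<bullet> i)) (at z)"
    by (simp add: i inner_axis)
qed

lemma px_re_part:
  fixes f :: "'n::finite \<Rightarrow> complex \<Rightarrow> complex" and f' :: "'n \<Rightarrow> complex"
  assumes "\<And>k. (f k has_field_derivative f' k) (at z)"
  shows "px (re_part f) z = (\<chi> k. Re (f' k))"
  using frechet_derivative_at[OF has_derivative_re_part[of f f' z, OF assms], symmetric]
  by (simp add: px_def)

lemma py_re_part:
  fixes f :: "'n::finite \<Rightarrow> complex \<Rightarrow> complex" and f' :: "'n \<Rightarrow> complex"
  assumes "\<And>k. (f k has_field_derivative f' k) (at z)"
  shows "py (re_part f) z = (\<chi> k. Re (\<i> * f' k))"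
  using frechet_derivative_at[OF has_derivative_re_part[of f f' z, OF assms], symmetric]
  by (simp add: py_def)

lemma dphi_re_part:
  fixes f :: "'n::finite \<Rightarrow> complex \<Rightarrow> complex" and f' :: "'n \<Rightarrow> complex"
  assumes "\<And>k. (f k has_field_derivative f' k) (at z)"
  shows "dphi (re_part f) z = (\<chi> k. f' k)"
  by (simp add: dphi_def px_re_part[OF assms] py_re_part[OF assms] vec_eq_iff complex_eq_iff)

lemma null_sum_Re_Im:
  fixes w :: "'i \<Rightarrow> complex"
  assumes "(\<Sum>k\<in>A. (w k)\<^sup>2) = 0"
  shows "(\<Sum>k\<in>A. (Re (w k))\<^sup>2) = (\<Sum>k\<in>A. (Im (w k))\<^sup>2)"
    and "(\<Sum>k\<in>A. Re (w k) * Im (w k)) = 0"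
  using arg_cong[OF assms, of Re] arg_cong[OF assms, of Im]
  by (simp_all add: Re_power2 Im_power2 sum_subtractf sum_distrib_left[symmetric] mult.assoc)

lemma induced_metric_re_part:
  fixes f :: "'n::finite \<Rightarrow> complex \<Rightarrow> complex" and f' :: "'n \<Rightarrow> complex"
  assumes "\<And>k. (f k has_field_derivative f' k) (at z)" and "(\<Sum>k\<in>UNIV. (f' k)\<^sup>2) = 0"
  shows "induced_metric (re_part f) z = (\<Sum>k\<in>UNIV. (cmod (f' k))\<^sup>2) / 2"
proof -
  have "induced_metric (re_part f) z = (\<Sum>k\<in>UNIV. (Re (f' k))\<^sup>2)"
    by (simp add: induced_metric_def px_re_part[OF assms(1)] inner_vec_def power2_eq_square)
  then show ?thesis
    using null_sum_Re_Im(1)[OF assms(2)] by (simp add: cmod_power2 sum.distrib)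
qed

lemma partials_re_part_on_open:
  fixes f f' :: "'n::finite \<Rightarrow> complex \<Rightarrow> complex"
  assumes "open U" "z \<in> U"
    and "\<And>k w. w \<in> U \<Longrightarrow> (f k has_field_derivative f' k w) (at w)"
    and "\<And>w. w \<in> U \<Longrightarrow> Y w = re_part f w"
  shows "Y differentiable at z"
    and "px Y z = re_part f' z" and "py Y z = re_part (\<lambda>k w. \<i> * f' k w) z"
proof -
  have "re_part f differentiable at z"
    using has_derivative_re_part[of f "\<lambda>k. f' k z", OF assms(3)[OF assms(2)]]
    by (rule differentiableI)
  then show "Y differentiable at z"
    using has_derivative_transform_within_open assms(1,2,4) unfolding differentiable_def by metis
  from \<open>re_part f differentiable at z\<close>
  have "frechet_derivative Y (at z) = frechet_derivative (re_part f) (at z)"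
    using frechet_derivative_transform_within_open assms(1,2,4) by metis
  then show "px Y z = re_part f' z" and "py Y z = re_part (\<lambda>k w. \<i> * f' k w) z"
    using px_re_part[of f "\<lambda>k. f' k z"] py_re_part[of f "\<lambda>k. f' k z"] assms(2,3)
    by (simp_all add: px_def py_def re_part_def)
qed

lemma continuous_on_re_part:
  "(\<And>k. continuous_on U (f k)) \<Longrightarrow> continuous_on U (re_part f)"
  unfolding re_part_def by (intro continuous_intros)

lemma null_vector_Re_conformal:
  fixes w :: "'n::finite \<Rightarrow> complex"
  assumes null: "(\<Sum>k\<in>UNIV. (w k)\<^sup>2) = 0" and nonzero: "w k \<noteq> 0"
  shows "(\<chi> k. Re (w k)) \<bullet> (\<chi> k. Re (\<i> * w k)) = 0"
    and "norm (\<chi> k. Re (w k)) = norm (\<chi> k. Re (\<i> * w k))"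
    and "(\<chi> k. Re (w k)) \<noteq> 0"
proof -
  note Re_Im = null_sum_Re_Im[OF null]
  show "(\<chi> k. Re (w k)) \<bullet> (\<chi> k. Re (\<i> * w k)) = 0"
    using Re_Im(2) by (simp add: inner_vec_def sum_negf)
  show "norm (\<chi> k. Re (w k)) = norm (\<chi> k. Re (\<i> * w k))"
    using Re_Im(1) by (simp add: norm_vec_def L2_set_def)
  show "(\<chi> k. Re (w k)) \<noteq> 0"
  proof
    assume "(\<chi> k. Re (w k)) = 0"
    then have Re: "Re (w j) = 0" for j
      by (simp add: vec_eq_iff)
    then have "(\<Sum>j\<in>UNIV. (Im (w j))\<^sup>2) = 0"
      using Re_Im(1) by simp
    then have "Im (w k) = 0"
      by (simp add: sum_nonneg_eq_0_iff)
    then show False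
      using Re nonzero by (simp add: complex_eq_iff)
  qed
qed

lemma conformal_harmonic_immersion_re_part:
  fixes F f :: "'n::finite \<Rightarrow> complex \<Rightarrow> complex"
  assumes U: "open U"
    and primitive: "\<And>k z. z \<in> U \<Longrightarrow> (F k has_field_derivative f k z) (at z)"
    and holo: "\<And>k. f k holomorphic_on U"
    and null: "\<And>z. z \<in> U \<Longrightarrow> (\<Sum>k\<in>UNIV. (f k z)\<^sup>2) = 0"
    and nonzero: "\<And>z. z \<in> U \<Longrightarrow> \<exists>k. f k z \<noteq> 0"
  shows "conformal_harmonic_immersion (re_part F) U"
proof -
  define f' where "f' k = deriv (f k)" for k
  have f': "(f k has_field_derivative f' k z) (at z)" if "z \<in> U" for k z
    unfolding f'_def using holomorphic_derivI[OF holo U that] .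
  have if': "((\<lambda>w. \<i> * f k w) has_field_derivative \<i> * f' k z) (at z)" if "z \<in> U" for k z
    using f'[OF that] by (rule DERIV_cmult)
  have cont_f': "continuous_on U (f' k)" for k
    unfolding f'_def by (intro holomorphic_on_imp_continuous_on holomorphic_deriv holo U)
  have X: "re_part F differentiable at z"
    and px: "px (re_part F) z = re_part f z" and py: "py (re_part F) z = re_part (\<lambda>k w. \<i> * f k w) z"
    if "z \<in> U" for z
    using partials_re_part_on_open[where f=F and f'=f, OF U that primitive] by simp_all
  have dpx: "px (re_part F) differentiable at z" and dpy: "py (re_part F) differentiable at z"
    and pxx: "px (px (re_part F)) z = re_part f' z"
    and pyx: "py (px (re_part F)) z = re_part (\<lambda>k w. \<i> * f' k w) z"
    and pxy: "px (py (re_part F)) z = re_part (\<lambda>k w. \<i> * f' k w) z"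
    and pyy: "py (py (re_part F)) z = re_part (\<lambda>k w. - f' k w) z"
    if "z \<in> U" for z
    using partials_re_part_on_open[where f=f and f'=f', OF U that f' px]
      partials_re_part_on_open[where f="\<lambda>k w. \<i> * f k w", OF U that if' py]
    by simp_all
  have cont: "continuous_on U (re_part f')" "continuous_on U (re_part (\<lambda>k w. \<i> * f' k w))"
    "continuous_on U (re_part (\<lambda>k w. - f' k w))"
    by (intro continuous_on_re_part continuous_intros cont_f')+
  show ?thesis
    unfolding conformal_harmonic_immersion_def
  proof (intro conjI ballI)
    fix z assume z: "z \<in> U"
    show "re_part F differentiable at z" "px (re_part F) differentiable at z"
      "py (re_part F) differentiable at z"
      using X dpx dpy z by blast+
    show "px (px (re_part F)) z + py (py (re_part F)) z = 0"
      by (simp add: pxx[OF z] pyy[OF z] re_part_def vec_eq_iff)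
    obtain k where "f k z \<noteq> 0" using nonzero[OF z] ..
    note conformal = null_vector_Re_conformal[OF null[OF z] this]
    show "px (re_part F) z \<bullet> py (re_part F) z = 0"
      "norm (px (re_part F) z) = norm (py (re_part F) z)" "px (re_part F) z \<noteq> 0"
      using conformal by (simp_all add: px[OF z] py[OF z] re_part_def)
  qed (use U cont pxx pyx pxy pyy continuous_on_eq in metis)+
qed

lemma simply_connected_primitives:
  fixes f :: "'i \<Rightarrow> complex \<Rightarrow> complex"
  assumes "open U" "simply_connected U" "\<And>k. f k holomorphic_on U"
  obtains F where "\<And>k z. z \<in> U \<Longrightarrow> (F k has_field_derivative f k z) (at z)"
proof -
  have "\<forall>k. \<exists>F. \<forall>z. z \<in> U \<longrightarrow> (F has_field_derivative f k z) (at z)"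
    using assms(2)[unfolded simply_connected_eq_global_primitive[OF assms(1)]] assms(3) by blast
  then obtain F where "\<forall>k z. z \<in> U \<longrightarrow> (F k has_field_derivative f k z) (at z)"
    by (rule exE[OF choice])
  then show ?thesis
    using that by blast
qed

lemma null_curve_conformal_harmonic_immersion:
  fixes f :: "complex \<Rightarrow> complex^'n"
  assumes "open U" "simply_connected U" "\<And>k. (\<lambda>z. f z $ k) holomorphic_on U"
    and "\<And>z. z \<in> U \<Longrightarrow> (\<Sum>k\<in>UNIV. (f z $ k)\<^sup>2) = 0" and "\<And>z. z \<in> U \<Longrightarrow> f z \<noteq> 0"
  obtains X where "conformal_harmonic_immersion X U" and "\<And>z. z \<in> U \<Longrightarrow> dphi X z = f z"
    and "\<And>z. z \<in> U \<Longrightarrow> induced_metric X z = (\<Sum>k\<in>UNIV. (cmod (f z $ k))\<^sup>2) / 2"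
proof -
  obtain F where F: "\<And>k z. z \<in> U \<Longrightarrow> (F k has_field_derivative f z $ k) (at z)"
    using simply_connected_primitives[of U "\<lambda>k z. f z $ k", OF assms(1-3)] by blast
  have "\<exists>k. f z $ k \<noteq> 0" if "z \<in> U" for z
    using assms(5)[OF that] by (simp add: vec_eq_iff)
  with assms(1) F assms(3,4) have "conformal_harmonic_immersion (re_part F) U"
    by (rule conformal_harmonic_immersion_re_part)
  moreover have "dphi (re_part F) z = f z" if "z \<in> U" for z
    using dphi_re_part[of F "\<lambda>k. f z $ k", OF F[OF that]] by simp
  moreover have "induced_metric (re_part F) z = (\<Sum>k\<in>UNIV. (cmod (f z $ k))\<^sup>2) / 2"
    if "z \<in> U" for z
    using induced_metric_re_part[of F "\<lambda>k. f z $ k", OF F[OF that] assms(4)[OF that]] .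
  ultimately show ?thesis
    using that by blast
qed

lemma dphi_nonzero:
  assumes "conformal_harmonic_immersion X U" "z \<in> U"
  shows "dphi X z \<noteq> 0"
proof
  assume "dphi X z = 0"
  moreover have "Re (dphi X z $ k) = px X z $ k" for k
    by (simp add: dphi_def)
  ultimately have "px X z $ k = 0" for k
    by simp
  then have "px X z = 0"
    by (simp add: vec_eq_iff)
  then show False
    using assms unfolding conformal_harmonic_immersion_def by blast
qed

lemma continuous_eq_where_analytic:
  fixes f g :: "complex \<Rightarrow> 'b::t2_space"
  assumes "open U" "G meromorphic_on U" "continuous_on U f" "continuous_on U g"
    and "\<And>w. w \<in> U \<Longrightarrow> G analytic_on {w} \<Longrightarrow> f w = g w" and "z \<in> U"
  shows "f z = g z"
proof -
  have "eventually (\<lambda>w. G analytic_on {w}) (at z)"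
    using meromorphic_on_imp_analytic_cosparse[OF assms(2)] assms(6)
    by (rule eventually_cosparse_imp_eventually_at)
  moreover have "eventually (\<lambda>w. w \<in> U) (at z)"
    using assms(1,6) eventually_at_topological by blast
  ultimately have "eventually (\<lambda>w. f w = g w) (at z)"
    by eventually_elim (use assms(5) in blast)
  moreover have "(f \<longlongrightarrow> f z) (at z)" "(g \<longlongrightarrow> g z) (at z)"
    using assms(1,3,4,6) by (metis continuous_on_eq_continuous_at isCont_def)+
  ultimately show ?thesis
    using tendsto_cong tendsto_unique[OF at_neq_bot] by metis
qed

lemma lifted_weierstrass_identities:
  fixes G \<Psi> \<phi>1 \<phi>2 \<phi>3 \<phi>h0 \<phi>h1 \<phi>h2 \<phi>h3 :: "complex \<Rightarrow> complex" and c :: complex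
  assumes U: "open U" and G: "G meromorphic_on U"
    and \<phi>hol: "\<phi>1 holomorphic_on U" "\<phi>2 holomorphic_on U" "\<phi>3 holomorphic_on U"
    and \<phi>hhol: "\<phi>h0 holomorphic_on U" "\<phi>h1 holomorphic_on U"
      "\<phi>h2 holomorphic_on U" "\<phi>h3 holomorphic_on U"
    and \<phi>def: "\<And>z. z \<in> U \<Longrightarrow> G analytic_on {z} \<Longrightarrow>
         \<phi>1 z = (1 - G z ^ 2) * \<Psi> z / 2 \<and> \<phi>2 z = \<i> * (1 + G z ^ 2) * \<Psi> z / 2 \<and>
         \<phi>3 z = G z * \<Psi> z"
    and \<phi>hdef: "\<And>z. z \<in> U \<Longrightarrow> G analytic_on {z} \<Longrightarrow>
         \<phi>h0 z = c * G z ^ 2 * \<Psi> z \<and>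
         \<phi>h1 z = (1 + (c ^ 2 - 1) * G z ^ 2) * \<Psi> z / 2 \<and>
         \<phi>h2 z = \<i> * (1 + (c ^ 2 + 1) * G z ^ 2) * \<Psi> z / 2 \<and>
         \<phi>h3 z = G z * \<Psi> z"
    and z: "z \<in> U"
  shows "\<phi>h0 z ^ 2 + \<phi>h1 z ^ 2 + \<phi>h2 z ^ 2 + \<phi>h3 z ^ 2 = 0"
    and "\<phi>h0 z + c * \<phi>h1 z + \<i> * c * \<phi>h2 z = 0"
    and "\<phi>1 z = ((c ^ 2 + 2) * \<phi>h1 z + \<i> * c ^ 2 * \<phi>h2 z) / 2"
    and "\<phi>2 z = (\<i> * c ^ 2 * \<phi>h1 z - (c ^ 2 - 2) * \<phi>h2 z) / 2"
    and "\<phi>3 z = \<phi>h3 z"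
proof -
  have regular: "\<phi>h0 w ^ 2 + \<phi>h1 w ^ 2 + \<phi>h2 w ^ 2 + \<phi>h3 w ^ 2 = 0 \<and>
      \<phi>h0 w + c * \<phi>h1 w + \<i> * c * \<phi>h2 w = 0 \<and>
      \<phi>1 w = ((c ^ 2 + 2) * \<phi>h1 w + \<i> * c ^ 2 * \<phi>h2 w) / 2 \<and>
      \<phi>2 w = (\<i> * c ^ 2 * \<phi>h1 w - (c ^ 2 - 2) * \<phi>h2 w) / 2 \<and> \<phi>3 w = \<phi>h3 w"
    if "w \<in> U" "G analytic_on {w}" for w
    using \<phi>def[OF that] \<phi>hdef[OF that]
    by (elim conjE) (simp only:, intro conjI; simp add: field_simps power2_eq_square)
  note extend = continuous_eq_where_analytic[OF U G _ _ _ z]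
  note cont = \<phi>hol[THEN holomorphic_on_imp_continuous_on] \<phi>hhol[THEN holomorphic_on_imp_continuous_on]
  show "\<phi>h0 z ^ 2 + \<phi>h1 z ^ 2 + \<phi>h2 z ^ 2 + \<phi>h3 z ^ 2 = 0"
  proof (rule extend)
    show "continuous_on U (\<lambda>z. \<phi>h0 z ^ 2 + \<phi>h1 z ^ 2 + \<phi>h2 z ^ 2 + \<phi>h3 z ^ 2)"
      by (intro continuous_intros cont)
  qed (use regular in auto)
  show "\<phi>h0 z + c * \<phi>h1 z + \<i> * c * \<phi>h2 z = 0"
  proof (rule extend)
    show "continuous_on U (\<lambda>z. \<phi>h0 z + c * \<phi>h1 z + \<i> * c * \<phi>h2 z)"
      by (intro continuous_intros cont)
  qed (use regular in auto)
  show "\<phi>1 z = ((c ^ 2 + 2) * \<phi>h1 z + \<i> * c ^ 2 * \<phi>h2 z) / 2"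
  proof (rule extend)
    show "continuous_on U (\<lambda>z. ((c ^ 2 + 2) * \<phi>h1 z + \<i> * c ^ 2 * \<phi>h2 z) / 2)"
      by (intro continuous_intros cont) simp
  qed (use cont regular in auto)
  show "\<phi>2 z = (\<i> * c ^ 2 * \<phi>h1 z - (c ^ 2 - 2) * \<phi>h2 z) / 2"
  proof (rule extend)
    show "continuous_on U (\<lambda>z. (\<i> * c ^ 2 * \<phi>h1 z - (c ^ 2 - 2) * \<phi>h2 z) / 2)"
      by (intro continuous_intros cont) simp
  qed (use cont regular in auto)
  show "\<phi>3 z = \<phi>h3 z"
    by (rule extend) (use cont regular in auto)
qed

lemma lifted_weierstrass_norm_sum:
  fixes c g p h0 h1 h2 h3 :: complex
  assumes "h0 = c * g ^ 2 * p" "h1 = (1 + (c ^ 2 - 1) * g ^ 2) * p / 2"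
    and "h2 = \<i> * (1 + (c ^ 2 + 1) * g ^ 2) * p / 2" "h3 = g * p"
    and "1 + \<i> * c * g \<noteq> 0" "1 - \<i> * c * g \<noteq> 0"
  shows "((cmod h0)\<^sup>2 + (cmod h1)\<^sup>2 + (cmod h2)\<^sup>2 + (cmod h3)\<^sup>2) / 2
    = (cmod p)\<^sup>2 * (cmod (1 + c ^ 2 * g ^ 2))\<^sup>2
      * (1 + (cmod g)\<^sup>2 / (cmod (1 + \<i> * c * g))\<^sup>2)
      * (1 + (cmod g)\<^sup>2 / (cmod (1 - \<i> * c * g))\<^sup>2) / 4"
proof -
  \<comment> \<open>In \<open>\<complex>\<close>, with \<open>|w|\<^sup>2 = w * cnj w\<close>, this is a polynomial identity.\<close>
  have "complex_of_real ((cmod h0)\<^sup>2 + (cmod h1)\<^sup>2 + (cmod h2)\<^sup>2 + (cmod h3)\<^sup>2)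
    = complex_of_real ((cmod p)\<^sup>2 * ((cmod (1 + \<i> * c * g))\<^sup>2 + (cmod g)\<^sup>2)
      * ((cmod (1 - \<i> * c * g))\<^sup>2 + (cmod g)\<^sup>2) / 2)"
    unfolding assms(1-4) of_real_add of_real_mult of_real_divide complex_norm_square
    by (simp add: field_simps) algebra
  then have sum: "(cmod h0)\<^sup>2 + (cmod h1)\<^sup>2 + (cmod h2)\<^sup>2 + (cmod h3)\<^sup>2
    = (cmod p)\<^sup>2 * ((cmod (1 + \<i> * c * g))\<^sup>2 + (cmod g)\<^sup>2)
      * ((cmod (1 - \<i> * c * g))\<^sup>2 + (cmod g)\<^sup>2) / 2"
    by (simp only: of_real_eq_iff)
  have "1 + c ^ 2 * g ^ 2 = (1 + \<i> * c * g) * (1 - \<i> * c * g)"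
    by (simp add: algebra_simps power2_eq_square)
  then have "cmod (1 + c ^ 2 * g ^ 2) = cmod (1 + \<i> * c * g) * cmod (1 - \<i> * c * g)"
    by (simp add: norm_mult)
  then show ?thesis
    unfolding sum using assms(5,6) by (simp add: field_simps power2_eq_square)
qed

lemma vector_4 [simp]:
  "(vector [x, y, z, w] :: ('a::zero)^4) $ 1 = x"
  "(vector [x, y, z, w] :: ('a::zero)^4) $ 2 = y"
  "(vector [x, y, z, w] :: ('a::zero)^4) $ 3 = z"
  "(vector [x, y, z, w] :: ('a::zero)^4) $ 4 = w"
  unfolding vector_def by (simp_all add: numeral_eq_Suc)

theorem theorem5p1:
  fixes U :: "complex set" and X :: "complex \<Rightarrow> real^3"
    and G \<Psi> \<phi>1 \<phi>2 \<phi>3 \<phi>h0 \<phi>h1 \<phi>h2 \<phi>h3 :: "complex \<Rightarrow> complex" and c :: complex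
  assumes U: "open U" "U \<noteq> {}" "simply_connected U"
    and G: "G meromorphic_on U"
    and \<Psi>: "\<Psi> holomorphic_on U"
    and \<phi>hol: "\<phi>1 holomorphic_on U" "\<phi>2 holomorphic_on U" "\<phi>3 holomorphic_on U"
    and \<phi>def: "\<And>z. z \<in> U \<Longrightarrow> G analytic_on {z} \<Longrightarrow>
         \<phi>1 z = (1 - G z ^ 2) * \<Psi> z / 2 \<and> \<phi>2 z = \<i> * (1 + G z ^ 2) * \<Psi> z / 2 \<and>
         \<phi>3 z = G z * \<Psi> z"
    and X: "conformal_harmonic_immersion X U"
    and Xphi: "\<And>z. z \<in> U \<Longrightarrow> dphi X z = vector [\<phi>1 z, \<phi>2 z, \<phi>3 z]"
    and nonplanar: "\<not> planar_surface X U"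
    and \<phi>hhol: "\<phi>h0 holomorphic_on U" "\<phi>h1 holomorphic_on U"
         "\<phi>h2 holomorphic_on U" "\<phi>h3 holomorphic_on U"
    and \<phi>hdef: "\<And>z. z \<in> U \<Longrightarrow> G analytic_on {z} \<Longrightarrow>
         \<phi>h0 z = c * G z ^ 2 * \<Psi> z \<and>
         \<phi>h1 z = (1 + (c ^ 2 - 1) * G z ^ 2) * \<Psi> z / 2 \<and>
         \<phi>h2 z = \<i> * (1 + (c ^ 2 + 1) * G z ^ 2) * \<Psi> z / 2 \<and>
         \<phi>h3 z = G z * \<Psi> z"
  shows "\<exists>Xc :: complex \<Rightarrow> real^4.
           conformal_harmonic_immersion Xc U \<and>
           (\<forall>z\<in>U. dphi Xc z = vector [\<phi>h0 z, \<phi>h1 z, \<phi>h2 z, \<phi>h3 z]) \<and>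
           (\<forall>z\<in>U. G analytic_on {z} \<longrightarrow> 1 + \<i> * c * G z \<noteq> 0 \<longrightarrow> 1 - \<i> * c * G z \<noteq> 0 \<longrightarrow>
              induced_metric Xc z =
                (cmod (\<Psi> z))\<^sup>2 * (cmod (1 + c ^ 2 * G z ^ 2))\<^sup>2
                * (1 + (cmod (G z))\<^sup>2 / (cmod (1 + \<i> * c * G z))\<^sup>2)
                * (1 + (cmod (G z))\<^sup>2 / (cmod (1 - \<i> * c * G z))\<^sup>2) / 4) \<and>
           (\<forall>z\<in>U. \<phi>h0 z + c * \<phi>h1 z + \<i> * c * \<phi>h2 z = 0) \<and>
           degenerate_surface Xc U"
proof -
  have identities:
    "\<phi>h0 z ^ 2 + \<phi>h1 z ^ 2 + \<phi>h2 z ^ 2 + \<phi>h3 z ^ 2 = 0"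
    "\<phi>h0 z + c * \<phi>h1 z + \<i> * c * \<phi>h2 z = 0"
    "\<phi>1 z = ((c ^ 2 + 2) * \<phi>h1 z + \<i> * c ^ 2 * \<phi>h2 z) / 2"
    "\<phi>2 z = (\<i> * c ^ 2 * \<phi>h1 z - (c ^ 2 - 2) * \<phi>h2 z) / 2"
    "\<phi>3 z = \<phi>h3 z" if "z \<in> U" for z
    using \<phi>def \<phi>hdef that
    by - (rule lifted_weierstrass_identities[OF U(1) G \<phi>hol \<phi>hhol]; assumption)+
  define \<phi>h :: "complex \<Rightarrow> complex^4"
    where "\<phi>h z = vector [\<phi>h0 z, \<phi>h1 z, \<phi>h2 z, \<phi>h3 z]" for z
  have holo: "(\<lambda>z. \<phi>h z $ k) holomorphic_on U" for k
    using exhaust_4[of k] \<phi>hhol by (auto simp: \<phi>h_def)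
  have null: "(\<Sum>k\<in>UNIV. (\<phi>h z $ k)\<^sup>2) = 0" if "z \<in> U" for z
    using identities(1)[OF that] by (simp add: \<phi>h_def sum_4)
  have nonzero: "\<phi>h z \<noteq> 0" if "z \<in> U" for z
  proof
    assume "\<phi>h z = 0"
    then have "\<phi>h1 z = 0" "\<phi>h2 z = 0" "\<phi>h3 z = 0"
      unfolding \<phi>h_def by (metis vector_4(2-4) zero_index)+
    then have "dphi X z = 0"
      using Xphi[OF that] identities(3-5)[OF that] by (simp add: vec_eq_iff forall_3)
    then show False
      using dphi_nonzero[OF X that] by blast
  qed
  obtain Xc :: "complex \<Rightarrow> real^4" where Xc: "conformal_harmonic_immersion Xc U"
    "\<And>z. z \<in> U \<Longrightarrow> dphi Xc z = \<phi>h z"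
    "\<And>z. z \<in> U \<Longrightarrow> induced_metric Xc z = (\<Sum>k\<in>UNIV. (cmod (\<phi>h z $ k))\<^sup>2) / 2"
    using null_curve_conformal_harmonic_immersion[of U \<phi>h, OF U(1,3) holo null nonzero] by metis
  show ?thesis
  proof (intro exI[of _ Xc] conjI ballI impI)
    fix z assume z: "z \<in> U" and "G analytic_on {z}"
      and poles: "1 + \<i> * c * G z \<noteq> 0" "1 - \<i> * c * G z \<noteq> 0"
    then show "induced_metric Xc z =
        (cmod (\<Psi> z))\<^sup>2 * (cmod (1 + c ^ 2 * G z ^ 2))\<^sup>2
        * (1 + (cmod (G z))\<^sup>2 / (cmod (1 + \<i> * c * G z))\<^sup>2)
        * (1 + (cmod (G z))\<^sup>2 / (cmod (1 - \<i> * c * G z))\<^sup>2) / 4"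
      unfolding Xc(3)[OF z] sum_4 \<phi>h_def vector_4
      using \<phi>hdef by (intro lifted_weierstrass_norm_sum poles) auto
  next
    have "vector [1, c, \<i> * c, 0] \<noteq> (0 :: complex^4)"
      by (metis vector_4(1) zero_index zero_neq_one)
    then show "degenerate_surface Xc U"
      unfolding degenerate_surface_def using identities(2) Xc(2)
      by (intro exI[of _ "vector [1, c, \<i> * c, 0]"]) (auto simp: \<phi>h_def sum_4 algebra_simps)
  qed (use Xc identities(2) in \<open>auto simp: \<phi>h_def\<close>)
qed

end
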